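(* For $n\ge1$ and every $\pi\in\mathfrak{S}_n$, $$\mathsf{des}\,\pi+(31\text{-}2)\pi+1=\pi(1)+(13\text{-}2)\pi.$$
   Context: $\mathsf{des}\,\pi=\#\{i\in[n-1]:\pi(i)>\pi(i+1)\}$; $(31\text{-}2)\pi=\#\{(i,j):i+1<j\le n,\ \pi(i+1)<\pi(j)<\pi(i)\}$; $(13\text{-}2)\pi=\#\{(i,j):i+1<j\le n,\ \pi(i)<\pi(j)<\pi(i+1)\}$. *)

theory Defs
  imports "HOL-Combinatorics.Permutations"
begin

definition des :: "nat \<Rightarrow> (nat \<Rightarrow> nat) \<Rightarrow> nat" where
  "des n \<pi> = card {i \<in> {1..n-1}. \<pi> i > \<pi> (i+1)}"

definition pat31_2 :: "nat \<Rightarrow> (nat \<Rightarrow> nat) \<Rightarrow> nat" where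
  "pat31_2 n \<pi> = card {(i,j). 1 \<le> i \<and> i + 1 < j \<and> j \<le> n \<and> \<pi> (i+1) < \<pi> j \<and> \<pi> j < \<pi> i}"

definition pat13_2 :: "nat \<Rightarrow> (nat \<Rightarrow> nat) \<Rightarrow> nat" where
  "pat13_2 n \<pi> = card {(i,j). 1 \<le> i \<and> i + 1 < j \<and> j \<le> n \<and> \<pi> i < \<pi> j \<and> \<pi> j < \<pi> (i+1)}"

end

theory Submission
  imports Defs
begin

text \<open>Let \<open>L k\<close> be the number of later entries smaller than \<open>\<pi> k\<close>. Splitting the entries after
  position \<open>i + 1\<close> according to whether they lie below \<open>min (\<pi> i) (\<pi> (i+1))\<close>, between the two
  values, or above both gives the local identity
  \<open>L i + (13-2 at i) = [\<pi> i > \<pi> (i+1)] + (31-2 at i) + L (i+1)\<close>.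
  Summing over \<open>i\<close> telescopes the \<open>L\<close>'s to \<open>L 1 - L n = \<pi> 1 - 1\<close>.\<close>

definition later_smaller :: "nat \<Rightarrow> (nat \<Rightarrow> nat) \<Rightarrow> nat \<Rightarrow> nat" where
  "later_smaller n \<pi> k = card {j. k < j \<and> j \<le> n \<and> \<pi> j < \<pi> k}"

definition later_between :: "nat \<Rightarrow> (nat \<Rightarrow> nat) \<Rightarrow> nat \<Rightarrow> nat \<Rightarrow> nat \<Rightarrow> nat set" where
  "later_between n \<pi> k a b = {j. k < j \<and> j \<le> n \<and> a < \<pi> j \<and> \<pi> j < b}"

lemma card_later_below_split:
  assumes "a \<le> b" and avoid: "\<And>j. k < j \<Longrightarrow> j \<le> n \<Longrightarrow> \<pi> j \<noteq> a"
  shows "card {j. k < j \<and> j \<le> n \<and> \<pi> j < b}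
       = card {j. k < j \<and> j \<le> n \<and> \<pi> j < a} + card (later_between n \<pi> k a b)"
proof -
  have "{j. k < j \<and> j \<le> n \<and> \<pi> j < b}
      = {j. k < j \<and> j \<le> n \<and> \<pi> j < a} \<union> later_between n \<pi> k a b"
    using assms by (force simp: later_between_def)
  moreover have "{j. k < j \<and> j \<le> n \<and> \<pi> j < a} \<inter> later_between n \<pi> k a b = {}"
    by (auto simp: later_between_def)
  ultimately show ?thesis
    by (simp add: card_Un_disjoint later_between_def)
qed

lemma later_smaller_step:
  assumes inj: "inj_on \<pi> {i..n}" and "i < n"
  shows "later_smaller n \<pi> i + card (later_between n \<pi> (Suc i) (\<pi> i) (\<pi> (Suc i)))
       = (if \<pi> (Suc i) < \<pi> i then 1 else 0) + card (later_between n \<pi> (Suc i) (\<pi> (Suc i)) (\<pi> i))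
         + later_smaller n \<pi> (Suc i)"
proof -
  have avoid: "\<pi> j \<noteq> \<pi> i" "\<pi> j \<noteq> \<pi> (Suc i)" if "Suc i < j" "j \<le> n" for j
    using inj_onD[OF inj] that \<open>i < n\<close> by fastforce+
  define A where "A = card {j. Suc i < j \<and> j \<le> n \<and> \<pi> j < \<pi> i}"
  have first: "later_smaller n \<pi> i = (if \<pi> (Suc i) < \<pi> i then 1 else 0) + A"
  proof -
    have "{j. i < j \<and> j \<le> n \<and> \<pi> j < \<pi> i}
        = (if \<pi> (Suc i) < \<pi> i then {Suc i} else {}) \<union> {j. Suc i < j \<and> j \<le> n \<and> \<pi> j < \<pi> i}"
      using \<open>i < n\<close> by (auto simp: Suc_le_eq) (metis Suc_lessI)
    then show ?thesis
      by (simp add: later_smaller_def A_def)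
  qed
  have "\<pi> i \<noteq> \<pi> (Suc i)"
    using inj_onD[OF inj] \<open>i < n\<close> by fastforce
  then consider "\<pi> (Suc i) < \<pi> i" | "\<pi> i < \<pi> (Suc i)"
    by linarith
  then show ?thesis
  proof cases
    case 1
    then have "A = later_smaller n \<pi> (Suc i) + card (later_between n \<pi> (Suc i) (\<pi> (Suc i)) (\<pi> i))"
      unfolding A_def later_smaller_def using avoid(2)
      by (intro card_later_below_split) auto
    with 1 first show ?thesis
      by (simp add: later_between_def)
  next
    case 2
    then have "later_smaller n \<pi> (Suc i) = A + card (later_between n \<pi> (Suc i) (\<pi> i) (\<pi> (Suc i)))"
      unfolding A_def later_smaller_def using avoid(1)
      by (intro card_later_below_split) auto
    with 2 first show ?thesis
      by (simp add: later_between_def)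
  qed
qed

lemma sum_shift_telescope:
  fixes f :: "nat \<Rightarrow> 'a::comm_monoid_add"
  assumes "m \<le> n"
  shows "f m + (\<Sum>i=m..<n. f (Suc i)) = (\<Sum>i=m..<n. f i) + f n"
  using assms by (induction n rule: dec_induct) (simp_all add: add.assoc[symmetric])

lemma card_pairs_eq_sum:
  "card {(i, j). 1 \<le> i \<and> Suc i < j \<and> j \<le> n \<and> P i j}
   = (\<Sum>i=1..<n. card {j. Suc i < j \<and> j \<le> n \<and> P i j})"
proof -
  have "{(i, j). 1 \<le> i \<and> Suc i < j \<and> j \<le> n \<and> P i j}
      = (SIGMA i:{1..<n}. {j. Suc i < j \<and> j \<le> n \<and> P i j})"
    by auto
  then show ?thesis
    by simp
qed

lemma des_eq_sum: "des n \<pi> = (\<Sum>i=1..<n. if \<pi> (Suc i) < \<pi> i then 1 else 0)"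
proof -
  have "{1..n - 1} = {1..<n}"
    by auto
  then show ?thesis
    by (simp add: des_def sum.If_cases Int_def conj_commute)
qed

lemma pat31_2_eq_sum:
  "pat31_2 n \<pi> = (\<Sum>i=1..<n. card (later_between n \<pi> (Suc i) (\<pi> (Suc i)) (\<pi> i)))"
  unfolding pat31_2_def later_between_def using card_pairs_eq_sum by simp

lemma pat13_2_eq_sum:
  "pat13_2 n \<pi> = (\<Sum>i=1..<n. card (later_between n \<pi> (Suc i) (\<pi> i) (\<pi> (Suc i))))"
  unfolding pat13_2_def later_between_def using card_pairs_eq_sum by simp

lemma card_permutes_below:
  assumes "\<pi> permutes {1..n}" and "v \<le> Suc n"
  shows "card {j \<in> {1..n}. \<pi> j < v} = v - 1"
proof -
  have "\<pi> ` {j \<in> {1..n}. \<pi> j < v} = {v' \<in> \<pi> ` {1..n}. v' < v}"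
    by auto
  also have "\<dots> = {1..<v}"
    using assms by (auto simp: permutes_image)
  finally have "card {j \<in> {1..n}. \<pi> j < v} = card {1..<v}"
    using permutes_inj[OF assms(1)] by (metis card_image inj_on_subset subset_UNIV)
  then show ?thesis
    by simp
qed

lemma later_smaller_first:
  assumes "\<pi> permutes {1..n}"
  shows "later_smaller n \<pi> 1 = \<pi> 1 - 1"
proof -
  have "{j. 1 < j \<and> j \<le> n \<and> \<pi> j < \<pi> 1} = {j \<in> {1..n}. \<pi> j < \<pi> 1}"
    by (auto simp: le_eq_less_or_eq)
  moreover have "\<pi> 1 \<le> Suc n"
    using assms permutes_in_image[OF assms(1), of 1] by auto
  ultimately show ?thesis
    using card_permutes_below[OF assms(1)] by (simp add: later_smaller_def)
qed

theorem lemma5p4: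
  fixes n :: nat and \<pi> :: "nat \<Rightarrow> nat"
  assumes "n \<ge> 1" and "\<pi> permutes {1..n}"
  shows "des n \<pi> + pat31_2 n \<pi> + 1 = \<pi> 1 + pat13_2 n \<pi>"
proof -
  let ?L = "later_smaller n \<pi>"
  have inj: "inj_on \<pi> {i..n}" for i
    using permutes_inj[OF assms(2)] by (rule inj_on_subset) simp
  have "(\<Sum>i=1..<n. ?L i) + pat13_2 n \<pi> = des n \<pi> + pat31_2 n \<pi> + (\<Sum>i=1..<n. ?L (Suc i))"
    unfolding des_eq_sum pat31_2_eq_sum pat13_2_eq_sum sum.distrib[symmetric]
    using later_smaller_step[OF inj] by (intro sum.cong) auto
  moreover have "?L 1 + (\<Sum>i=1..<n. ?L (Suc i)) = (\<Sum>i=1..<n. ?L i) + ?L n"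
    using sum_shift_telescope assms(1) .
  moreover have "?L n = 0"
    by (simp add: later_smaller_def)
  moreover have "?L 1 = \<pi> 1 - 1" and "\<pi> 1 \<ge> 1"
    using later_smaller_first assms permutes_in_image[OF assms(2), of 1] by auto
  ultimately show ?thesis
    by linarith
qed

end
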